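(* Let $X$ be a finite set, let $\mathcal{C}^{\ast}$ be a target clustering of $X$, and let $\gamma$ be any natural clustering error (with respect to $\mathcal{C}^{\ast}$). Then for every clustering $\mathcal{C}$ of $X$, $$\gamma(\mathcal{C},\mathcal{C}^{\ast}) \ge \delta(\mathcal{C},\mathcal{C}^{\ast}),$$ where $\delta(\mathcal{C},\mathcal{C}^{\ast}) = \mathrm{dist}(\mathcal{C}^{\ast},\mathcal{C}) + \mathrm{dist}(\mathcal{C},\mathcal{C}^{\ast})$.
   Context: A clustering of a finite set $X$ is a partition of $X$ into nonempty clusters. The target (ground-truth) clustering is $\mathcal{C}^{\ast}=\{C^{\ast}_1,\dots,C^{\ast}_k\}$. For clusterings $\mathcal{C},\mathcal{C}'$ of $X$ define $\mathrm{dist}(\mathcal{C},\mathcal{C}')=\sum_{A\in\mathcal{C}}\big(|\{B\in\mathcal{C}': B\cap A\neq\emptyset\}|-1\big)$. For a proposed clustering $\mathcal{C}$, $\delta_u=\mathrm{dist}(\mathcal{C}^{\ast},\mathcal{C})$ is its underclustering error, $\delta_o=\mathrm{dist}(\mathcal{C},\mathcal{C}^{\ast})$ its overclustering error, and $\delta(\mathcal{C},\mathcal{C}^{\ast})=\delta_u+\delta_o$. A natural clustering error is a function $\gamma$ assigning to each clustering $\mathcal{C}$ of $X$ a nonnegative integer $\gamma(\mathcal{C},\mathcal{C}^{\ast})$ such that for every clustering $\mathcal{C}$: (1) if some cluster $C_i\in\mathcal{C}$ contains points of $C^{\ast}_j$ and points of some other target cluster, then the clustering obtained by replacing $C_i$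 with the two clusters $C_i\cap C^{\ast}_j$ and $C_i\setminus C^{\ast}_j$ has strictly smaller $\gamma$; (2) if two distinct clusters of $\mathcal{C}$ both contain only points from the same target cluster, then the clustering obtained by replacing them with their union has strictly smaller $\gamma$. *)

theory Defs
  imports Main "HOL-Library.Disjoint_Sets"
begin

text \<open>A clustering of X: a partition of X into nonempty, pairwise disjoint clusters
  (library notion partition_on).\<close>

definition clust_dist :: "'a set set \<Rightarrow> 'a set set \<Rightarrow> nat" where
  "clust_dist C C' = (\<Sum>A\<in>C. card {B\<in>C'. B \<inter> A \<noteq> {}} - 1)"

definition delta_err :: "'a set set \<Rightarrow> 'a set set \<Rightarrow> nat" where
  "delta_err C Cstar = clust_dist Cstar C + clust_dist C Cstar"

text \<open>gamma C is the error gamma(C, Cstar) of clustering C w.r.t. the fixed target Cstar.\<close>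
definition natural_clustering_error :: "'a set \<Rightarrow> 'a set set \<Rightarrow> ('a set set \<Rightarrow> nat) \<Rightarrow> bool" where
  "natural_clustering_error X Cstar gamma \<longleftrightarrow>
     (\<forall>C. partition_on X C \<longrightarrow>
        (\<forall>Ci\<in>C. \<forall>Cj\<in>Cstar.
            Ci \<inter> Cj \<noteq> {} \<and> (\<exists>D\<in>Cstar. D \<noteq> Cj \<and> Ci \<inter> D \<noteq> {}) \<longrightarrow>
            gamma ((C - {Ci}) \<union> {Ci \<inter> Cj, Ci - Cj}) < gamma C)
      \<and> (\<forall>A\<in>C. \<forall>B\<in>C. A \<noteq> B \<and> (\<exists>T\<in>Cstar. A \<subseteq> T \<and> B \<subseteq> T) \<longrightarrow>
            gamma ((C - {A, B}) \<union> {A \<union> B}) < gamma C))"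

end

theory Submission
  imports Defs
begin

text \<open>Writing \<open>m(P, Q)\<close> for the number of pairs of intersecting clusters of \<open>P\<close> and \<open>Q\<close>, one has
  \<open>dist(P, Q) = m(P, Q) - |P|\<close>, so \<open>\<delta>(C, C\<^sup>*) = 2 m(C, C\<^sup>*) - |C| - |C\<^sup>*|\<close>. Splitting a cluster along a
  target cluster keeps \<open>m\<close> and adds a cluster; merging two clusters inside one target cluster
  loses one intersecting pair and one cluster. Either move therefore lowers \<open>\<delta>\<close> by exactly one,
  while it lowers \<open>\<gamma>\<close> by at least one. A clustering admitting neither move refines the target and
  is refined by it, so it is the target, where \<open>\<delta> = 0\<close>. Induction on \<open>\<gamma>\<close> gives \<open>\<gamma> \<ge> \<delta>\<close>.\<close>

abbreviation meeting :: "'a set set \<Rightarrow> 'a set \<Rightarrow> 'a set set" where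
  "meeting Q A \<equiv> {B\<in>Q. B \<inter> A \<noteq> {}}"

definition meet_count :: "'a set set \<Rightarrow> 'a set set \<Rightarrow> nat" where
  "meet_count P Q = (\<Sum>A\<in>P. card (meeting Q A))"

lemma meeting_nonempty:
  assumes "partition_on X Q" "A \<subseteq> X" "A \<noteq> {}"
  shows "meeting Q A \<noteq> {}"
  using assms unfolding partition_on_def by blast

lemma meeting_subset_block:
  assumes "disjoint Q" "T \<in> Q" "E \<subseteq> T" "E \<noteq> {}"
  shows "meeting Q E = {T}"
  using assms unfolding disjoint_def by blast

lemma meeting_diff_block:
  assumes "disjoint Q" "T \<in> Q"
  shows "meeting Q (A - T) = meeting Q A - {T}"
  using assms unfolding disjoint_def by blast

lemma clust_dist_add_card:
  assumes "finite Q" "partition_on X P" "partition_on X Q"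
  shows "clust_dist P Q + card P = meet_count P Q"
proof -
  have "card (meeting Q A) \<ge> 1" if "A \<in> P" for A
  proof -
    have "meeting Q A \<noteq> {}"
      using meeting_nonempty[OF assms(3)] assms(2) that unfolding partition_on_def by blast
    then show ?thesis
      using assms(1) by (simp add: Suc_leI card_gt_0_iff)
  qed
  then show ?thesis
    unfolding clust_dist_def meet_count_def card_eq_sum[of P] sum.distrib[symmetric]
    by (intro sum.cong refl) (simp add: Suc_le_eq)
qed

lemma meet_count_commute:
  assumes "finite P" "finite Q"
  shows "meet_count P Q = meet_count Q P"
proof -
  have "meet_count P Q = (\<Sum>A\<in>P. \<Sum>B\<in>Q. if A \<inter> B \<noteq> {} then 1 else 0)"
    unfolding meet_count_def using assms(2)
    by (simp add: sum.inter_filter[symmetric] Int_commute)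
  also have "\<dots> = (\<Sum>B\<in>Q. \<Sum>A\<in>P. if A \<inter> B \<noteq> {} then 1 else 0)"
    by (rule sum.swap)
  also have "\<dots> = meet_count Q P"
    unfolding meet_count_def using assms(1)
    by (simp add: sum.inter_filter[symmetric])
  finally show ?thesis .
qed

lemma delta_err_add_card:
  assumes "finite X" "partition_on X C" "partition_on X Cs"
  shows "delta_err C Cs + card C + card Cs = 2 * meet_count C Cs"
proof -
  have "finite C" "finite Cs"
    using assms finite_elements by blast+
  then show ?thesis
    using clust_dist_add_card[OF _ assms(2,3)] clust_dist_add_card[OF _ assms(3,2)]
      meet_count_commute[of C Cs]
    unfolding delta_err_def by simp
qed

lemma delta_err_self:
  assumes "partition_on X C"
  shows "delta_err C C = 0"
proof -
  have "meeting C A = {A}" if "A \<in> C" for A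
    using meeting_subset_block[of C A A] assms that
    unfolding partition_on_def by blast
  then show ?thesis
    unfolding delta_err_def clust_dist_def by simp
qed

lemma partition_on_split:
  assumes "partition_on X C" "A \<in> C" "A \<inter> T \<noteq> {}" "A - T \<noteq> {}"
  shows "partition_on X ((C - {A}) \<union> {A \<inter> T, A - T})"
proof (rule partition_onI)
  show "\<Union> ((C - {A}) \<union> {A \<inter> T, A - T}) = X"
    using assms(1,2) partition_onD1 by fastforce
  show "{} \<notin> (C - {A}) \<union> {A \<inter> T, A - T}"
    using assms partition_onD3 by auto
  show "disjnt p q" if "p \<in> (C - {A}) \<union> {A \<inter> T, A - T}" "q \<in> (C - {A}) \<union> {A \<inter> T, A - T}"
    "p \<noteq> q" for p q
    using that assms(2) disjointD[OF partition_onD2[OF assms(1)]] unfolding disjnt_def by blast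
qed

lemma partition_on_merge:
  assumes "partition_on X C" "A \<in> C" "B \<in> C"
  shows "partition_on X ((C - {A, B}) \<union> {A \<union> B})"
proof (rule partition_onI)
  show "\<Union> ((C - {A, B}) \<union> {A \<union> B}) = X"
    using assms(1-3) partition_onD1 by fastforce
  show "{} \<notin> (C - {A, B}) \<union> {A \<union> B}"
    using assms partition_onD3 by auto
  show "disjnt p q" if "p \<in> (C - {A, B}) \<union> {A \<union> B}" "q \<in> (C - {A, B}) \<union> {A \<union> B}" "p \<noteq> q"
    for p q
    using that assms(2,3) disjointD[OF partition_onD2[OF assms(1)]] unfolding disjnt_def by blast
qed

lemma delta_err_split:
  assumes "finite X" "partition_on X C" "partition_on X Cs"
    and "A \<in> C" "T \<in> Cs" "A \<inter> T \<noteq> {}" "A - T \<noteq> {}"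
  shows "delta_err ((C - {A}) \<union> {A \<inter> T, A - T}) Cs + 1 = delta_err C Cs"
proof -
  define C' where "C' = insert (A \<inter> T) (insert (A - T) (C - {A}))"
  have fin: "finite C" "finite Cs"
    using assms(1-3) finite_elements by blast+
  have disj: "disjoint C" "disjoint Cs"
    using assms(2,3) partition_onD2 by blast+
  have new: "A \<inter> T \<notin> C - {A}" "A - T \<notin> C - {A}" "A \<inter> T \<noteq> A - T"
    using assms(6,7) disjointD[OF disj(1) _ assms(4)] by blast+
  have "card C' = card C + 1"
    unfolding C'_def using new fin(1) card_Suc_Diff1[OF fin(1) assms(4)] by simp
  moreover have "meet_count C' Cs
      = card (meeting Cs (A \<inter> T)) + card (meeting Cs (A - T)) + meet_count (C - {A}) Cs"
    unfolding C'_def meet_count_def using new fin(1) by simp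
  moreover have "card (meeting Cs (A \<inter> T)) + card (meeting Cs (A - T)) = card (meeting Cs A)"
  proof -
    have "T \<in> meeting Cs A"
      using assms(5,6) by blast
    then show ?thesis
      using meeting_subset_block[OF disj(2) assms(5), of "A \<inter> T"] assms(6)
        meeting_diff_block[OF disj(2) assms(5)] card_Suc_Diff1[of "meeting Cs A" T] fin(2)
      by simp
  qed
  moreover have "meet_count C Cs = card (meeting Cs A) + meet_count (C - {A}) Cs"
    unfolding meet_count_def using fin(1) assms(4) by (simp add: sum.remove)
  moreover have "C' = (C - {A}) \<union> {A \<inter> T, A - T}"
    unfolding C'_def by blast
  ultimately show ?thesis
    using delta_err_add_card[OF assms(1) partition_on_split[OF assms(2,4,6,7)] assms(3)]
      delta_err_add_card[OF assms(1-3)]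
    by simp
qed

lemma delta_err_merge:
  assumes "finite X" "partition_on X C" "partition_on X Cs"
    and "A \<in> C" "B \<in> C" "A \<noteq> B" "T \<in> Cs" "A \<subseteq> T" "B \<subseteq> T"
  shows "delta_err ((C - {A, B}) \<union> {A \<union> B}) Cs + 1 = delta_err C Cs"
proof -
  define C' where "C' = insert (A \<union> B) (C - {A} - {B})"
  have fin: "finite C"
    using assms(1,2) finite_elements by blast
  have disj: "disjoint C" "disjoint Cs"
    using assms(2,3) partition_onD2 by blast+
  have nonempty: "A \<noteq> {}" "B \<noteq> {}"
    using assms(2,4,5) partition_onD3 by blast+
  have new: "A \<union> B \<notin> C - {A} - {B}"
    using nonempty disjointD[OF disj(1) _ assms(4)] by blast
  have meets_T: "card (meeting Cs E) = 1" if "E \<subseteq> T" "E \<noteq> {}" for E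
    using meeting_subset_block[OF disj(2) assms(7) that] by simp
  have "card C' + 1 = card C"
    unfolding C'_def using new fin assms(4-6)
      card_Suc_Diff1[OF fin assms(4)] card_Suc_Diff1[of "C - {A}" B] by simp
  moreover have "meet_count C' Cs = 1 + meet_count (C - {A} - {B}) Cs"
    unfolding C'_def meet_count_def using new fin meets_T[of "A \<union> B"] nonempty assms(8,9)
    by simp
  moreover have "meet_count C Cs = 2 + meet_count (C - {A} - {B}) Cs"
    unfolding meet_count_def using fin assms(4-6) meets_T nonempty assms(8,9)
    by (simp add: sum.remove[of C A] sum.remove[of "C - {A}" B])
  moreover have "C' = (C - {A, B}) \<union> {A \<union> B}"
    unfolding C'_def by blast
  ultimately show ?thesis
    using delta_err_add_card[OF assms(1) partition_on_merge[OF assms(2,4,5)] assms(3)]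
      delta_err_add_card[OF assms(1-3)]
    by simp
qed

lemma refines_if_unsplittable:
  assumes "partition_on X C" "partition_on X Cs"
    and "\<And>A T. A \<in> C \<Longrightarrow> T \<in> Cs \<Longrightarrow> A \<inter> T \<noteq> {} \<Longrightarrow> A \<subseteq> T"
  shows "refines X C Cs"
  unfolding refines_def
proof (intro conjI ballI assms(1,2))
  fix A assume A: "A \<in> C"
  then obtain x where "x \<in> A"
    using partition_onD3[OF assms(1)] by (metis ex_in_conv)
  moreover obtain T where "T \<in> Cs" "x \<in> T"
    using \<open>x \<in> A\<close> A partition_onD1[OF assms(1)] partition_onD1[OF assms(2)] by blast
  ultimately show "\<exists>T\<in>Cs. A \<subseteq> T"
    using assms(3)[OF A] by blast
qed

lemma refines_converse_if_unmergeable: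
  assumes "refines X C Cs"
    and "\<And>A B T. A \<in> C \<Longrightarrow> B \<in> C \<Longrightarrow> T \<in> Cs \<Longrightarrow> A \<subseteq> T \<Longrightarrow> B \<subseteq> T \<Longrightarrow> A = B"
  shows "refines X Cs C"
  unfolding refines_def
proof (intro conjI ballI)
  show "partition_on X Cs" "partition_on X C"
    using assms(1) unfolding refines_def by blast+
  fix T assume T: "T \<in> Cs"
  have blocks: "partition_on T {A \<in> C. A \<subseteq> T}"
    using refines_obtains_subset[OF assms(1) T] .
  moreover have "T \<noteq> {}"
    using \<open>partition_on X Cs\<close> T partition_onD3 by blast
  ultimately obtain A where A: "A \<in> C" "A \<subseteq> T"
    using partition_onD1 by fastforce
  then have "{A \<in> C. A \<subseteq> T} = {A}"
    using assms(2)[OF _ _ T] by blast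
  then show "\<exists>A\<in>C. T \<subseteq> A"
    using blocks A(1) partition_onD1 by fastforce
qed

lemma natural_clustering_error_descent:
  assumes "finite X" "partition_on X Cstar" "natural_clustering_error X Cstar gamma"
    and "partition_on X C" "C \<noteq> Cstar"
  obtains C' where "partition_on X C'" "gamma C' < gamma C"
    "delta_err C' Cstar + 1 = delta_err C Cstar"
proof -
  note moves = assms(3)[unfolded natural_clustering_error_def, THEN spec, THEN mp, OF assms(4)]
  have "C = Cstar"
    if "\<forall>A\<in>C. \<forall>T\<in>Cstar. A \<inter> T \<noteq> {} \<longrightarrow> A - T = {}"
      and "\<forall>A\<in>C. \<forall>B\<in>C. \<forall>T\<in>Cstar. A \<subseteq> T \<and> B \<subseteq> T \<longrightarrow> A = B"
  proof (rule refines_asym)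
    show "refines X C Cstar"
      using assms(4,2) by (rule refines_if_unsplittable) (use that(1) in blast)
    then show "refines X Cstar C"
      by (rule refines_converse_if_unmergeable) (use that(2) in blast)
  qed
  then consider (split) A T where "A \<in> C" "T \<in> Cstar" "A \<inter> T \<noteq> {}" "A - T \<noteq> {}"
    | (merge) A B T where "A \<in> C" "B \<in> C" "A \<noteq> B" "T \<in> Cstar" "A \<subseteq> T" "B \<subseteq> T"
    using assms(5) by meson
  then show ?thesis
  proof cases
    case split
    obtain D where "D \<in> Cstar" "D \<noteq> T" "A \<inter> D \<noteq> {}"
    proof -
      obtain x where "x \<in> A" "x \<notin> T"
        using split(4) by blast
      moreover obtain D where "D \<in> Cstar" "x \<in> D"
        using \<open>x \<in> A\<close> split(1) partition_onD1[OF assms(2)] partition_onD1[OF assms(4)] by blast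
      ultimately show thesis
        using that by blast
    qed
    then have "gamma ((C - {A}) \<union> {A \<inter> T, A - T}) < gamma C"
      using conjunct1[OF moves] split(1-3) by blast
    with split show ?thesis
      using that partition_on_split[OF assms(4)] delta_err_split[OF assms(1,4,2)] by blast
  next
    case merge
    then have "gamma ((C - {A, B}) \<union> {A \<union> B}) < gamma C"
      using conjunct2[OF moves] by blast
    with merge show ?thesis
      using that partition_on_merge[OF assms(4)] delta_err_merge[OF assms(1,4,2)] by blast
  qed
qed

theorem theorem8:
  fixes X :: "'a set" and Cstar :: "'a set set" and gamma :: "'a set set \<Rightarrow> nat"
  assumes "finite X"
    and "partition_on X Cstar"
    and "natural_clustering_error X Cstar gamma"
    and "partition_on X C"
  shows "gamma C \<ge> delta_err C Cstar"
  using assms(4)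
proof (induction "gamma C" arbitrary: C rule: less_induct)
  case less
  show ?case
  proof (cases "C = Cstar")
    case True
    then show ?thesis
      using delta_err_self[OF assms(2)] by simp
  next
    case False
    obtain C' where "partition_on X C'" "gamma C' < gamma C"
      "delta_err C' Cstar + 1 = delta_err C Cstar"
      using natural_clustering_error_descent[OF assms(1-3) less.prems False] .
    then show ?thesis
      using less.hyps[of C'] by simp
  qed
qed

end
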